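(* Let $p$ be an odd prime, $q$ a power of $p$, and $n\ge 0$ an integer. Let $f_n(x)=\sum_{j\ge 0}\binom{n}{2j+1}x^j$. Then in $\mathbb{F}_q[x]$, $$F_n(1,x)=\left(\tfrac12\right)^{n-1}f_n(1-4x).$$ In particular, $F_n(1,x)$ is a permutation polynomial of $\mathbb{F}_q$ if and only if $f_n(x)$ is a permutation polynomial of $\mathbb{F}_q$.
   Context: For an integer $n\ge 1$, the $n$-th reversed Dickson polynomial of the third kind is $F_n(a,x)=\sum_{i=0}^{\lfloor n/2\rfloor}\frac{n-2i}{n-i}\binom{n-i}{i}(-x)^i a^{n-2i}$, where each coefficient $\frac{n-2i}{n-i}\binom{n-i}{i}$ is an integer (read in $\mathbb{F}_q$), and $F_0(a,x)=0$. A polynomial $f\in\mathbb{F}_q[x]$ is a permutation polynomial of $\mathbb{F}_q$ if $c\mapsto f(c)$ is a bijection of $\mathbb{F}_q$. *)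

theory Defs
  imports "HOL-Computational_Algebra.Computational_Algebra"
begin

text \<open>Reversed Dickson polynomial of the third kind F_n(a,x) as a polynomial in x.
  The coefficient (n-2i)/(n-i) * binom(n-i,i) is an integer, computed by exact nat division.\<close>
definition rdickson3 :: "nat \<Rightarrow> 'a::comm_ring_1 \<Rightarrow> 'a poly" where
  "rdickson3 n a = (if n = 0 then 0 else
     (\<Sum>i\<le>n div 2. monom (of_nat (((n - 2*i) * ((n - i) choose i)) div (n - i))
                           * (-1)^i * a^(n - 2*i)) i))"

definition fpoly :: "nat \<Rightarrow> 'a::comm_ring_1 poly" where
  "fpoly n = (\<Sum>j\<le>n. monom (of_nat (n choose (2*j+1))) j)"

definition perm_poly :: "'a::comm_ring_1 poly \<Rightarrow> bool" where
  "perm_poly p \<longleftrightarrow> bij (poly p)"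

end

theory Submission
  imports Defs
begin

text \<open>The coefficients of F_n(a,x) are (-1)^i binom(n-1-i, i) a^(n-2i), so Pascal's rule gives
  F_(n+2) = a F_(n+1) - x F_n; likewise g_n = f_n(1-4x) satisfies g_(n+2) = 2 g_(n+1) - 4x g_n.
  Hence 2^n F_n(1,x) = 2 g_n by induction over any commutative ring, a form that includes n = 0
  and needs no division; in odd characteristic one then divides by 2^n. Since F_n(1,x) is f_n
  pre- and post-composed with affine bijections, one permutes the field iff the other does.\<close>

lemma rdickson3_coeff_nat:
  assumes "n \<ge> 1"
  shows "((n - 2*i) * ((n - i) choose i)) div (n - i) = (n - 1 - i) choose i"
proof (cases "i < n")
  case True
  have "(n - 2*i) * ((n - i) choose i) = ((n - i) - i) * ((n - i) choose i)"
    by (simp add: mult_2)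
  also have "\<dots> = (n - i) * ((n - i - 1) choose i)"
    by (rule binomial_absorb_comp)
  finally show ?thesis
    using True by (simp add: diff_commute)
next
  case False
  then show ?thesis
    using assms by simp
qed

lemma coeff_rdickson3:
  "coeff (rdickson3 n a) i =
     (if n = 0 then 0 else of_nat ((n - 1 - i) choose i) * (-1)^i * a^(n - 2*i))"
proof (cases "n = 0")
  case True
  then show ?thesis by (simp add: rdickson3_def)
next
  case False
  have "coeff (rdickson3 n a) i =
    (if i \<le> n div 2 then of_nat (((n - 2*i) * ((n - i) choose i)) div (n - i)) * (-1)^i * a^(n - 2*i)
     else 0)"
    using False by (simp add: rdickson3_def coeff_sum)
  also have "\<dots> = of_nat ((n - 1 - i) choose i) * (-1)^i * a^(n - 2*i)"
    using False rdickson3_coeff_nat[of n i] by (simp add: binomial_eq_0)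
  finally show ?thesis
    using False by simp
qed

lemma rdickson3_Suc_Suc:
  "rdickson3 (Suc (Suc n)) a = smult a (rdickson3 (Suc n) a) - pCons 0 (rdickson3 n a)"
proof (rule poly_eqI)
  fix i
  show "coeff (rdickson3 (Suc (Suc n)) a) i = coeff (smult a (rdickson3 (Suc n) a) - pCons 0 (rdickson3 n a)) i"
  proof (cases i)
    case 0
    then show ?thesis by (simp add: coeff_rdickson3)
  next
    case (Suc k)
    show ?thesis
    proof (cases "2*k < n")
      case True
      have "n - k = Suc (n - Suc k)" "n - 2*k = Suc (n - Suc (2*k))" using True by auto
      then show ?thesis
        using Suc True by (auto simp: coeff_rdickson3 coeff_pCons algebra_simps)
    next
      case False
      then show ?thesis
        using Suc by (auto simp: coeff_rdickson3 coeff_pCons binomial_eq_0)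
    qed
  qed
qed

lemma coeff_fpoly: "coeff (fpoly n) k = of_nat (n choose (2*k+1))"
  by (simp add: fpoly_def coeff_sum binomial_eq_0)

lemma fpoly_Suc_Suc:
  "fpoly (Suc (Suc n)) = smult 2 (fpoly (Suc n)) - fpoly n + pCons 0 (fpoly n)"
proof (rule poly_eqI)
  fix k
  show "coeff (fpoly (Suc (Suc n))) k = coeff (smult 2 (fpoly (Suc n)) - fpoly n + pCons 0 (fpoly n)) k"
  proof (cases k)
    case 0
    then show ?thesis by (simp add: coeff_fpoly algebra_simps)
  next
    case (Suc j)
    define m where "m = 2*j + 1"
    have "(Suc (Suc n) choose Suc (Suc m)) + (n choose Suc (Suc m)) =
        2 * (Suc n choose Suc (Suc m)) + (n choose m)"
      by simp
    then have "(of_nat (Suc (Suc n) choose Suc (Suc m)) :: 'a) + of_nat (n choose Suc (Suc m)) =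
        2 * of_nat (Suc n choose Suc (Suc m)) + of_nat (n choose m)"
      by (metis of_nat_add of_nat_mult of_nat_numeral)
    then show ?thesis
      using Suc by (simp add: coeff_fpoly m_def algebra_simps flip: eq_diff_eq)
  qed
qed

lemma pcompose_fpoly_Suc_Suc:
  "pcompose (fpoly (Suc (Suc n))) [:1, -4:] =
     smult 2 (pcompose (fpoly (Suc n)) [:1, -4:]) - smult 4 (pCons 0 (pcompose (fpoly n) [:1, -4:]))"
proof -
  have "pcompose (pCons 0 p) [:1, -4:] = pcompose p [:1, -4:] - smult 4 (pCons 0 (pcompose p [:1, -4:]))"
    for p :: "'a poly"
    by (simp add: pcompose_pCons algebra_simps)
  then show ?thesis
    by (simp add: fpoly_Suc_Suc pcompose_add pcompose_diff pcompose_smult)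
qed

lemma smult_two_power_rdickson3_one:
  "smult (2^n) (rdickson3 n (1 :: 'a :: comm_ring_1)) = smult 2 (pcompose (fpoly n) [:1, -4:])"
proof (induction n rule: induct_nat_012)
  case 0
  have "fpoly 0 = (0 :: 'a poly)"
    by (rule poly_eqI) (simp add: coeff_fpoly)
  then show ?case
    by (simp add: rdickson3_def)
next
  case 1
  have "rdickson3 1 1 = (1 :: 'a poly)" "fpoly 1 = (1 :: 'a poly)"
    by (rule poly_eqI; simp add: coeff_rdickson3 coeff_fpoly binomial_eq_0)+
  then show ?case
    by (simp add: pcompose_1)
next
  case (ge2 n)
  have "smult (2 ^ Suc (Suc n)) (rdickson3 (Suc (Suc n)) (1 :: 'a)) =
      smult 2 (smult (2 ^ Suc n) (rdickson3 (Suc n) 1)) - smult 4 (pCons 0 (smult (2^n) (rdickson3 n 1)))"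
    by (simp add: rdickson3_Suc_Suc smult_diff_right)
  also have "\<dots> = smult 2 (pcompose (fpoly (Suc (Suc n))) [:1, -4:])"
    unfolding ge2 pcompose_fpoly_Suc_Suc by (simp add: smult_diff_right)
  finally show ?case .
qed

lemma rdickson3_one_eq_pcompose_fpoly:
  assumes "(2::'a::field) \<noteq> 0"
  shows "rdickson3 n (1::'a) = smult ((inverse 2) powi (int n - 1)) (pcompose (fpoly n) [:1, -4:])"
proof -
  have "inverse 2 ^ n * 2 ^ n = (1::'a)"
    using assms by (simp flip: power_mult_distrib)
  then have "rdickson3 n (1::'a) = smult (inverse 2 ^ n) (smult (2^n) (rdickson3 n 1))"
    by (simp only: smult_smult smult_1_left)
  also have "\<dots> = smult (inverse 2 ^ n * 2) (pcompose (fpoly n) [:1, -4:])"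
    by (simp add: smult_two_power_rdickson3_one)
  also have "inverse 2 ^ n * 2 = (inverse 2 :: 'a) powi (int n - 1)"
    using assms by (simp add: power_int_diff field_simps)
  finally show ?thesis .
qed

lemma two_neq_zero_if_odd_CHAR:
  assumes "odd (CHAR('a::{semiring_1, zero_neq_one}))"
  shows "(2::'a) \<noteq> 0"
proof
  assume "(2::'a) = 0"
  then have "CHAR('a) dvd 2"
    by (metis of_nat_eq_0_iff_char_dvd of_nat_numeral)
  then have "CHAR('a) = 1 \<or> CHAR('a) = 2"
    using prime_nat_iff two_is_prime_nat by blast
  with assms show False
    by auto
qed

lemma perm_poly_smult_pcompose_linear:
  fixes p :: "'a :: field poly"
  assumes "c \<noteq> 0" "u \<noteq> 0"
  shows "perm_poly (smult c (pcompose p [:v, u:])) \<longleftrightarrow> perm_poly p"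
proof -
  have bij_affine: "bij (\<lambda>x. s * x + t)" if "s \<noteq> 0" for s t :: 'a
    by (rule bij_betw_byWitness[where f' = "\<lambda>y. (y - t) / s"]) (use that in auto)
  have "poly (smult c (pcompose p [:v, u:])) = (\<lambda>y. c * y) \<circ> (poly p \<circ> (\<lambda>x. u * x + v))"
    by (auto simp: poly_pcompose algebra_simps)
  moreover have "bij (\<lambda>y. c * y)"
    using bij_affine[of c 0] assms by simp
  then have "bij ((\<lambda>y. c * y) \<circ> g) \<longleftrightarrow> bij g" for g :: "'a \<Rightarrow> 'a"
    using bij_betw_comp_iff2[of "\<lambda>y. c * y" UNIV UNIV g UNIV] by simp
  moreover have "bij (g \<circ> (\<lambda>x. u * x + v)) \<longleftrightarrow> bij g" for g :: "'a \<Rightarrow> 'a"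
    using bij_betw_comp_iff[OF bij_affine[OF \<open>u \<noteq> 0\<close>], of g UNIV] by simp
  ultimately show ?thesis
    unfolding perm_poly_def by simp
qed

theorem proposition3p2:
  fixes n :: nat
  assumes "odd (CHAR('a::{field,finite}))"
  shows "rdickson3 n (1::'a) = smult ((inverse 2) powi (int n - 1)) (pcompose (fpoly n) [:1, -4:])
         \<and> (perm_poly (rdickson3 n (1::'a)) \<longleftrightarrow> perm_poly (fpoly n :: 'a poly))"
proof -
  have two: "(2::'a) \<noteq> 0"
    using two_neq_zero_if_odd_CHAR[OF assms] .
  have "(4::'a) = 2 * 2"
    by simp
  with two have four: "(-4::'a) \<noteq> 0"
    by (metis mult_eq_0_iff neg_equal_0_iff_equal)
  have scale: "(inverse 2 :: 'a) powi (int n - 1) \<noteq> 0"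
    using two by simp
  show ?thesis
    unfolding rdickson3_one_eq_pcompose_fpoly[OF two, of n]
    using perm_poly_smult_pcompose_linear[OF scale four] by blast
qed

end
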